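(* Let $(A,B,R)$ be a normalized formal context. Then every join-irreducible element of the lattice $(\mathcal{C}_N,\leq)$ is an atom of $(\mathcal{C}_N,\leq)$.
   Context: A formal context is a triple $(A,B,R)$ with $R\subseteq A\times B$. The necessity operators are $X^{\uparrow_N}=\{a\in A\mid \text{for all } b\in B,\ (a,b)\in R\Rightarrow b\in X\}$ for $X\subseteq B$, and $Y^{\downarrow^N}=\{b\in B\mid \text{for all } a\in A,\ (a,b)\in R\Rightarrow a\in Y\}$ for $Y\subseteq A$. $\mathcal{C}_N=\{(X,Y)\mid X\subseteq B,\ Y\subseteq A,\ X^{\uparrow_N}=Y,\ Y^{\downarrow^N}=X\}$, ordered by $(X_1,Y_1)\leq(X_2,Y_2)$ iff $X_1\subseteq X_2$ (equivalently $Y_1\subseteq Y_2$); it is a complete lattice with join $(X_1\cup X_2,Y_1\cup Y_2)$, meet $(X_1\cap X_2,Y_1\cap Y_2)$ and bottom $(\varnothing,\varnothing)$. The context is normalized if for every $a\in A$ there are $b,b'\in B$ with $(a,b)\in R$, $(a,b')\notin R$, and for every $b\in B$ there are $a,a'\in A$ with $(a,b)\in R$, $(a',b)\notin R$. An element $x$ of a lattice is join-irreducible if $x$ is not the bottom element and $x=y\vee z$ implies $x=y$ or $x=z$; an atom is an element $x$ covering the bottom $\bot$, i.e. $\bot<x$ and no $y$ with $\bot<y<x$. *)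

theory Defs
  imports Main
begin

definition formal_context :: "'a set \<Rightarrow> 'b set \<Rightarrow> ('a \<times> 'b) set \<Rightarrow> bool" where
  "formal_context A B R \<longleftrightarrow> R \<subseteq> A \<times> B"

definition up_N :: "'a set \<Rightarrow> 'b set \<Rightarrow> ('a \<times> 'b) set \<Rightarrow> 'b set \<Rightarrow> 'a set" where
  "up_N A B R X = {a \<in> A. \<forall>b\<in>B. (a, b) \<in> R \<longrightarrow> b \<in> X}"

definition down_N :: "'a set \<Rightarrow> 'b set \<Rightarrow> ('a \<times> 'b) set \<Rightarrow> 'a set \<Rightarrow> 'b set" where
  "down_N A B R Y = {b \<in> B. \<forall>a\<in>A. (a, b) \<in> R \<longrightarrow> a \<in> Y}"

definition C_N :: "'a set \<Rightarrow> 'b set \<Rightarrow> ('a \<times> 'b) set \<Rightarrow> ('b set \<times> 'a set) set" where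
  "C_N A B R = {(X, Y). X \<subseteq> B \<and> Y \<subseteq> A \<and> up_N A B R X = Y \<and> down_N A B R Y = X}"

definition leq_N :: "('b set \<times> 'a set) \<Rightarrow> ('b set \<times> 'a set) \<Rightarrow> bool" where
  "leq_N p q \<longleftrightarrow> fst p \<subseteq> fst q"

definition less_N :: "('b set \<times> 'a set) \<Rightarrow> ('b set \<times> 'a set) \<Rightarrow> bool" where
  "less_N p q \<longleftrightarrow> leq_N p q \<and> p \<noteq> q"

definition join_N :: "('b set \<times> 'a set) \<Rightarrow> ('b set \<times> 'a set) \<Rightarrow> ('b set \<times> 'a set)" where
  "join_N p q = (fst p \<union> fst q, snd p \<union> snd q)"

definition bot_N :: "'b set \<times> 'a set" where
  "bot_N = ({}, {})"

definition normalized :: "'a set \<Rightarrow> 'b set \<Rightarrow> ('a \<times> 'b) set \<Rightarrow> bool" where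
  "normalized A B R \<longleftrightarrow>
     (\<forall>a\<in>A. (\<exists>b\<in>B. (a, b) \<in> R) \<and> (\<exists>b'\<in>B. (a, b') \<notin> R)) \<and>
     (\<forall>b\<in>B. (\<exists>a\<in>A. (a, b) \<in> R) \<and> (\<exists>a'\<in>A. (a', b) \<notin> R))"

definition join_irreducible_N :: "'a set \<Rightarrow> 'b set \<Rightarrow> ('a \<times> 'b) set \<Rightarrow> ('b set \<times> 'a set) \<Rightarrow> bool" where
  "join_irreducible_N A B R x \<longleftrightarrow> x \<in> C_N A B R \<and> x \<noteq> bot_N \<and>
     (\<forall>y\<in>C_N A B R. \<forall>z\<in>C_N A B R. x = join_N y z \<longrightarrow> x = y \<or> x = z)"

definition atom_N :: "'a set \<Rightarrow> 'b set \<Rightarrow> ('a \<times> 'b) set \<Rightarrow> ('b set \<times> 'a set) \<Rightarrow> bool" where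
  "atom_N A B R x \<longleftrightarrow> x \<in> C_N A B R \<and> less_N bot_N x \<and>
     \<not> (\<exists>y\<in>C_N A B R. less_N bot_N y \<and> less_N y x)"

end

theory Submission
  imports Defs
begin

text \<open>Elements of C_N behave like unions of connected components of the bipartite graph R:
  if (X', Y') \<in> C_N, no object outside Y' is related to an attribute in X', because
  X' = down_N (up_N X'). Provided every object has an attribute and every attribute an object,
  this makes C_N closed under relative complements, so any y with bottom < y < x splits x as
  the join of y and x - y, both strictly below x.\<close>

lemma up_N_converse: "up_N B A (R\<inverse>) Y = down_N A B R Y"
  by (auto simp: down_N_def up_N_def)

lemma down_N_converse: "down_N B A (R\<inverse>) X = up_N A B R X"
  by (auto simp: down_N_def up_N_def)

lemma up_N_mono: "X \<subseteq> X' \<Longrightarrow> up_N A B R X \<subseteq> up_N A B R X'"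
  by (auto simp: up_N_def)

lemma up_N_Diff:
  assumes serial: "\<forall>a\<in>A. \<exists>b\<in>B. (a, b) \<in> R"
    and closed: "down_N A B R (up_N A B R X') = X'"
  shows "up_N A B R (X - X') = up_N A B R X - up_N A B R X'"
proof
  show "up_N A B R (X - X') \<subseteq> up_N A B R X - up_N A B R X'"
  proof
    fix a assume "a \<in> up_N A B R (X - X')"
    then have "a \<in> A" and succ: "\<forall>b\<in>B. (a, b) \<in> R \<longrightarrow> b \<in> X - X'"
      by (auto simp: up_N_def)
    moreover obtain b where "b \<in> B" "(a, b) \<in> R" using serial \<open>a \<in> A\<close> by blast
    ultimately show "a \<in> up_N A B R X - up_N A B R X'" by (auto simp: up_N_def)
  qed
next
  show "up_N A B R X - up_N A B R X' \<subseteq> up_N A B R (X - X')"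
  proof
    fix a assume a: "a \<in> up_N A B R X - up_N A B R X'"
    have "b \<notin> X'" if "b \<in> B" "(a, b) \<in> R" for b
    proof
      assume "b \<in> X'"
      then have "b \<in> down_N A B R (up_N A B R X')" using closed by simp
      with a that show False by (auto simp: down_N_def up_N_def)
    qed
    with a show "a \<in> up_N A B R (X - X')" by (auto simp: up_N_def)
  qed
qed

lemma down_N_Diff:
  assumes "\<forall>b\<in>B. \<exists>a\<in>A. (a, b) \<in> R"
    and "up_N A B R (down_N A B R Y') = Y'"
  shows "down_N A B R (Y - Y') = down_N A B R Y - down_N A B R Y'"
  using up_N_Diff[of B A "R\<inverse>" Y' Y] assms
  by (simp add: up_N_converse down_N_converse)

lemma C_N_Diff:
  assumes "\<forall>a\<in>A. \<exists>b\<in>B. (a, b) \<in> R" and "\<forall>b\<in>B. \<exists>a\<in>A. (a, b) \<in> R"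
    and "(X, Y) \<in> C_N A B R" and "(X', Y') \<in> C_N A B R"
  shows "(X - X', Y - Y') \<in> C_N A B R"
  using assms up_N_Diff[of A B R X' X] down_N_Diff[of B A R Y' Y] by (auto simp: C_N_def)

lemma leq_N_C_N_snd_subset:
  assumes "y \<in> C_N A B R" and "x \<in> C_N A B R" and "leq_N y x"
  shows "snd y \<subseteq> snd x"
  using assms up_N_mono[of "fst y" "fst x" A B R] by (auto simp: C_N_def leq_N_def)

theorem mainTheorem2:
  fixes A :: "'a set" and B :: "'b set" and R :: "('a \<times> 'b) set"
  assumes "formal_context A B R"
    and "normalized A B R"
    and "join_irreducible_N A B R x"
  shows "atom_N A B R x"
proof -
  have serial: "\<forall>a\<in>A. \<exists>b\<in>B. (a, b) \<in> R" "\<forall>b\<in>B. \<exists>a\<in>A. (a, b) \<in> R"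
    using assms(2) by (auto simp: normalized_def)
  have x: "x \<in> C_N A B R" "x \<noteq> bot_N"
    and irreducible: "\<And>y z. y \<in> C_N A B R \<Longrightarrow> z \<in> C_N A B R \<Longrightarrow> x = join_N y z \<Longrightarrow> x = y \<or> x = z"
    using assms(3) by (auto simp: join_irreducible_N_def)
  have False if y: "y \<in> C_N A B R" "less_N bot_N y" "less_N y x" for y
  proof -
    define z where "z = (fst x - fst y, snd x - snd y)"
    have "z \<in> C_N A B R"
      using C_N_Diff[OF serial, of "fst x" "snd x" "fst y" "snd y"] x y by (simp add: z_def)
    moreover have "snd y \<subseteq> snd x" "fst y \<subseteq> fst x"
      using leq_N_C_N_snd_subset[OF y(1) x(1)] y(3) by (auto simp: less_N_def leq_N_def)
    then have "x = join_N y z" by (auto simp: join_N_def z_def prod_eq_iff)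
    ultimately have "x = y \<or> x = z" using irreducible y(1) by blast
    with y \<open>fst y \<subseteq> fst x\<close> \<open>snd y \<subseteq> snd x\<close> show False
      by (auto simp: less_N_def bot_N_def z_def prod_eq_iff)
  qed
  moreover have "less_N bot_N x" using x(2) by (simp add: less_N_def leq_N_def bot_N_def)
  ultimately show ?thesis using x(1) by (auto simp: atom_N_def)
qed

end
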